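(* Let $K$ be a field of characteristic $0$, let $S=K[x_1,\ldots,x_n]$ be graded by $\deg x_i=a_i>0$, and let $I\subsetneq S$ be a graded ideal which is strongly Golod, i.e. $\partial(I)^2\subseteq I$, where $\partial(I)$ is the ideal generated by all $\partial f/\partial x_i$ with $f\in I$, $1\le i\le n$. Let $P$ be a homogeneous prime ideal of $S$ containing $I$. Then $I+P^k$ is strongly Golod (i.e. $\partial(I+P^k)^2\subseteq I+P^k$) for all $k\ge2$. *)

theory Defs
  imports Main "HOL-Library.Poly_Mapping"
begin

(* Polynomial ring S = K[x_v : v in 'v] over a finite variable type 'v,
  realised as finitely supported functions from exponent vectors to coefficients. *)

type_synonym ('v, 'a) mpoly = "('v \<Rightarrow>\<^sub>0 nat) \<Rightarrow>\<^sub>0 'a"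

definition is_ideal :: "'r::comm_ring_1 set \<Rightarrow> bool" where
  "is_ideal I \<longleftrightarrow> 0 \<in> I \<and> (\<forall>a\<in>I. \<forall>b\<in>I. a + b \<in> I) \<and> (\<forall>r. \<forall>a\<in>I. r * a \<in> I)"

definition ideal_gen :: "'r::comm_ring_1 set \<Rightarrow> 'r set" where
  "ideal_gen G = \<Inter>{J. is_ideal J \<and> G \<subseteq> J}"

definition ideal_sum :: "'r::comm_ring_1 set \<Rightarrow> 'r set \<Rightarrow> 'r set" where
  "ideal_sum I J = {a + b | a b. a \<in> I \<and> b \<in> J}"

definition ideal_pow :: "'r::comm_ring_1 set \<Rightarrow> nat \<Rightarrow> 'r set" where
  "ideal_pow J k = ideal_gen {prod_list xs | xs. length xs = k \<and> set xs \<subseteq> J}"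

definition prime_ideal :: "'r::comm_ring_1 set \<Rightarrow> bool" where
  "prime_ideal P \<longleftrightarrow> is_ideal P \<and> P \<noteq> UNIV \<and> (\<forall>a b. a * b \<in> P \<longrightarrow> a \<in> P \<or> b \<in> P)"

definition wdeg :: "('v::finite \<Rightarrow> nat) \<Rightarrow> ('v \<Rightarrow>\<^sub>0 nat) \<Rightarrow> nat" where
  "wdeg w m = (\<Sum>v\<in>UNIV. w v * Poly_Mapping.lookup m v)"

definition hcomp :: "('v::finite \<Rightarrow> nat) \<Rightarrow> nat \<Rightarrow> ('v, 'a::zero) mpoly \<Rightarrow> ('v, 'a) mpoly" where
  "hcomp w d f = Abs_poly_mapping (\<lambda>m. if wdeg w m = d then Poly_Mapping.lookup f m else 0)"

definition graded_ideal :: "('v::finite \<Rightarrow> nat) \<Rightarrow> ('v, 'a::comm_ring_1) mpoly set \<Rightarrow> bool" where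
  "graded_ideal w I \<longleftrightarrow> is_ideal I \<and> (\<forall>f\<in>I. \<forall>d. hcomp w d f \<in> I)"

definition pderiv_var :: "'v \<Rightarrow> ('v, 'a::comm_ring_1) mpoly \<Rightarrow> ('v, 'a) mpoly" where
  "pderiv_var v f = (\<Sum>m\<in>Poly_Mapping.keys f.
     Poly_Mapping.single (m - Poly_Mapping.single v 1) (of_nat (Poly_Mapping.lookup m v) * Poly_Mapping.lookup f m))"

definition deriv_ideal :: "('v, 'a::comm_ring_1) mpoly set \<Rightarrow> ('v, 'a) mpoly set" where
  "deriv_ideal I = ideal_gen {pderiv_var v f | v f. f \<in> I}"

definition strongly_Golod :: "('v, 'a::comm_ring_1) mpoly set \<Rightarrow> bool" where
  "strongly_Golod I \<longleftrightarrow> ideal_pow (deriv_ideal I) 2 \<subseteq> I"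

end

theory Submission
  imports Defs
begin

text \<open>Only the Leibniz rule matters: it gives \<open>\<partial>(P\<^sup>k) \<subseteq> P\<^sup>k\<^sup>-\<^sup>1\<close>, hence
  \<open>\<partial>(I + P\<^sup>k) \<subseteq> \<partial>(I) + P\<^sup>k\<^sup>-\<^sup>1\<close>. Every \<open>g \<in> \<partial>(I)\<close> has \<open>g\<^sup>2 \<in> I \<subseteq> P\<close>, so \<open>\<partial>(I) \<subseteq> P\<close>
  by primality. Multiplying out two elements of \<open>\<partial>(I) + P\<^sup>k\<^sup>-\<^sup>1\<close>, the product of the
  \<open>\<partial>(I)\<close>-parts lies in \<open>I\<close> and every other product lies in \<open>P\<^sup>k\<close> since \<open>k \<ge> 2\<close>.\<close>

lemma is_ideal_zero: "is_ideal I \<Longrightarrow> 0 \<in> I"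
  unfolding is_ideal_def by blast

lemma is_ideal_add: "is_ideal I \<Longrightarrow> a \<in> I \<Longrightarrow> b \<in> I \<Longrightarrow> a + b \<in> I"
  unfolding is_ideal_def by blast

lemma is_ideal_mult_left: "is_ideal I \<Longrightarrow> a \<in> I \<Longrightarrow> r * a \<in> I"
  unfolding is_ideal_def by blast

lemma is_ideal_mult_right: "is_ideal I \<Longrightarrow> a \<in> I \<Longrightarrow> a * r \<in> I"
  using is_ideal_mult_left[of I a r] by (simp add: mult.commute)

lemma is_ideal_ideal_gen: "is_ideal (ideal_gen G)"
  unfolding ideal_gen_def is_ideal_def by (intro conjI ballI allI; simp)

lemma ideal_gen_subset: "G \<subseteq> ideal_gen G"
  unfolding ideal_gen_def by blast

lemma ideal_gen_least: "is_ideal J \<Longrightarrow> G \<subseteq> J \<Longrightarrow> ideal_gen G \<subseteq> J"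
  unfolding ideal_gen_def by blast

lemma is_ideal_mult_preimage: "is_ideal T \<Longrightarrow> is_ideal {x. x * b \<in> T}"
  unfolding is_ideal_def by (simp add: distrib_right mult.assoc)

lemma is_ideal_ideal_sum:
  assumes "is_ideal I" "is_ideal J"
  shows "is_ideal (ideal_sum I J)"
  unfolding is_ideal_def
proof (intro conjI ballI allI)
  show "0 \<in> ideal_sum I J"
    using assms is_ideal_zero unfolding ideal_sum_def by force
next
  fix x y assume "x \<in> ideal_sum I J" "y \<in> ideal_sum I J"
  then obtain a b c d where "x = a + b" "y = c + d" "a \<in> I" "b \<in> J" "c \<in> I" "d \<in> J"
    unfolding ideal_sum_def by blast
  moreover have "a + b + (c + d) = (a + c) + (b + d)"
    by (simp add: algebra_simps)
  ultimately show "x + y \<in> ideal_sum I J"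
    using assms is_ideal_add unfolding ideal_sum_def by blast
next
  fix r x assume "x \<in> ideal_sum I J"
  then obtain a b where "x = a + b" "a \<in> I" "b \<in> J"
    unfolding ideal_sum_def by blast
  moreover have "r * (a + b) = r * a + r * b"
    by (simp add: algebra_simps)
  ultimately show "r * x \<in> ideal_sum I J"
    using assms is_ideal_mult_left unfolding ideal_sum_def by blast
qed

lemma is_ideal_ideal_pow: "is_ideal (ideal_pow J k)"
  unfolding ideal_pow_def by (rule is_ideal_ideal_gen)

lemma prod_list_mem_ideal_pow: "length xs = k \<Longrightarrow> set xs \<subseteq> J \<Longrightarrow> prod_list xs \<in> ideal_pow J k"
  unfolding ideal_pow_def by (rule subsetD[OF ideal_gen_subset]) blast

lemma ideal_pow_subsetI:
  assumes "is_ideal T" "\<And>xs. length xs = k \<Longrightarrow> set xs \<subseteq> J \<Longrightarrow> prod_list xs \<in> T"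
  shows "ideal_pow J k \<subseteq> T"
  unfolding ideal_pow_def using assms by (intro ideal_gen_least) auto

lemma ideal_pow_0: "ideal_pow J 0 = UNIV"
proof -
  have "1 \<in> ideal_pow J 0"
    using prod_list_mem_ideal_pow[of "[]" 0 J] by simp
  then show ?thesis
    using is_ideal_mult_right[OF is_ideal_ideal_pow] by fastforce
qed

lemma mem_ideal_pow_1: "a \<in> J \<Longrightarrow> a \<in> ideal_pow J 1"
  using prod_list_mem_ideal_pow[of "[a]" 1 J] by simp

lemma mult_mem_ideal_pow_2: "a \<in> J \<Longrightarrow> b \<in> J \<Longrightarrow> a * b \<in> ideal_pow J 2"
  using prod_list_mem_ideal_pow[of "[a, b]" 2 J] by simp

lemma ideal_pow_mult:
  assumes "a \<in> ideal_pow J i" "b \<in> ideal_pow J j"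
  shows "a * b \<in> ideal_pow J (i + j)"
proof -
  have "prod_list ys * prod_list xs \<in> ideal_pow J (i + j)"
    if "length xs = i" "set xs \<subseteq> J" "length ys = j" "set ys \<subseteq> J" for xs ys
    using that prod_list_mem_ideal_pow[of "ys @ xs" "i + j" J] by simp
  then have "b * prod_list xs \<in> ideal_pow J (i + j)"
    if "length xs = i" "set xs \<subseteq> J" for xs
    using that ideal_pow_subsetI[OF is_ideal_mult_preimage[OF is_ideal_ideal_pow]] assms(2)
    by blast
  then have "ideal_pow J i \<subseteq> {x. x * b \<in> ideal_pow J (i + j)}"
    by (intro ideal_pow_subsetI is_ideal_mult_preimage is_ideal_ideal_pow) (simp add: mult.commute)
  with assms(1) show ?thesis by blast
qed

lemma ideal_pow_antimono:
  assumes "j \<le> i"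
  shows "ideal_pow J i \<subseteq> ideal_pow J j"
proof (rule ideal_pow_subsetI[OF is_ideal_ideal_pow])
  fix xs :: "'a list" assume xs: "length xs = i" "set xs \<subseteq> J"
  have "prod_list (take j xs) \<in> ideal_pow J j"
    using xs assms by (intro prod_list_mem_ideal_pow) (auto dest: in_set_takeD)
  then have "prod_list (take j xs) * prod_list (drop j xs) \<in> ideal_pow J j"
    by (rule is_ideal_mult_right[OF is_ideal_ideal_pow])
  then show "prod_list xs \<in> ideal_pow J j"
    by (metis append_take_drop_id prod_list.append)
qed

lemma ideal_pow_2_subset_iff:
  assumes "is_ideal T"
  shows "ideal_pow J 2 \<subseteq> T \<longleftrightarrow> (\<forall>a\<in>J. \<forall>b\<in>J. a * b \<in> T)"
proof
  assume "\<forall>a\<in>J. \<forall>b\<in>J. a * b \<in> T"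
  then show "ideal_pow J 2 \<subseteq> T"
    using assms by (intro ideal_pow_subsetI) (auto simp: numeral_2_eq_2 length_Suc_conv)
qed (use mult_mem_ideal_pow_2 in blast)

definition is_derivation :: "('r::comm_ring_1 \<Rightarrow> 'r) \<Rightarrow> bool" where
  "is_derivation d \<longleftrightarrow> (\<forall>a b. d (a + b) = d a + d b) \<and> (\<forall>a b. d (a * b) = d a * b + a * d b)"

lemma derivation_add: "is_derivation d \<Longrightarrow> d (a + b) = d a + d b"
  unfolding is_derivation_def by blast

lemma derivation_mult: "is_derivation d \<Longrightarrow> d (a * b) = d a * b + a * d b"
  unfolding is_derivation_def by blast

lemma derivation_zero: "is_derivation d \<Longrightarrow> d 0 = 0"
  using derivation_add[of d 0 0] by simp

lemma derivation_prod_list_mem_ideal_pow: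
  assumes "is_derivation d" "set xs \<subseteq> P"
  shows "d (prod_list xs) \<in> ideal_pow P (length xs - 1)"
  using assms(2)
proof (induction xs)
  case Nil
  then show ?case by (simp add: ideal_pow_0)
next
  case (Cons x ys)
  have "d x * prod_list ys \<in> ideal_pow P (length ys)"
    using Cons.prems by (intro is_ideal_mult_left[OF is_ideal_ideal_pow] prod_list_mem_ideal_pow) auto
  moreover have "x * d (prod_list ys) \<in> ideal_pow P (length ys)"
  proof (cases "ys = []")
    case False
    have "x * d (prod_list ys) \<in> ideal_pow P (1 + (length ys - 1))"
      using Cons by (intro ideal_pow_mult mem_ideal_pow_1) auto
    with False show ?thesis by simp
  qed (simp add: ideal_pow_0)
  ultimately show ?case
    by (simp add: derivation_mult[OF assms(1)] is_ideal_add[OF is_ideal_ideal_pow])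
qed

lemma derivation_mem_ideal_pow:
  assumes "is_derivation d" "f \<in> ideal_pow P k"
  shows "d f \<in> ideal_pow P (k - 1)"
proof -
  let ?S = "{f \<in> ideal_pow P k. d f \<in> ideal_pow P (k - 1)}"
  have "is_ideal ?S"
    unfolding is_ideal_def
  proof (intro conjI ballI allI)
    show "0 \<in> ?S"
      by (simp add: derivation_zero[OF assms(1)] is_ideal_zero[OF is_ideal_ideal_pow])
  next
    fix a b assume "a \<in> ?S" "b \<in> ?S"
    then show "a + b \<in> ?S"
      by (simp add: derivation_add[OF assms(1)] is_ideal_add[OF is_ideal_ideal_pow])
  next
    fix r a assume a: "a \<in> ?S"
    then have "a \<in> ideal_pow P (k - 1)"
      using ideal_pow_antimono[of "k - 1" k P] by auto
    with a show "r * a \<in> ?S"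
      by (simp add: derivation_mult[OF assms(1)] is_ideal_add is_ideal_mult_left
          is_ideal_mult_right is_ideal_ideal_pow)
  qed
  then have "ideal_pow P k \<subseteq> ?S"
  proof (rule ideal_pow_subsetI)
    fix xs assume "length xs = k" "set xs \<subseteq> P"
    then show "prod_list xs \<in> ?S"
      using prod_list_mem_ideal_pow derivation_prod_list_mem_ideal_pow[OF assms(1)] by blast
  qed
  with assms(2) show ?thesis by blast
qed

lemma poly_mapping_single_add_induct [case_names zero single add]:
  fixes f :: "'k \<Rightarrow>\<^sub>0 'b::comm_monoid_add"
  assumes "Q 0" "\<And>m c. Q (Poly_Mapping.single m c)" "\<And>f g. Q f \<Longrightarrow> Q g \<Longrightarrow> Q (f + g)"
  shows "Q f"
proof -
  have "Q (\<Sum>m\<in>A. Poly_Mapping.single m (c m))" if "finite A" for A and c :: "'k \<Rightarrow> 'b"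
    using that by (induction A rule: finite_induct) (auto intro: assms)
  moreover have "f = (\<Sum>m\<in>Poly_Mapping.keys f. Poly_Mapping.single m (Poly_Mapping.lookup f m))"
    by (rule poly_mapping_eqI) (simp add: lookup_sum lookup_single when_def in_keys_iff)
  ultimately show ?thesis by (metis finite_keys)
qed

lemma pderiv_var_sum_superset:
  assumes "finite A" "Poly_Mapping.keys f \<subseteq> A"
  shows "pderiv_var v f = (\<Sum>m\<in>A. Poly_Mapping.single (m - Poly_Mapping.single v 1)
    (of_nat (Poly_Mapping.lookup m v) * Poly_Mapping.lookup f m))"
  unfolding pderiv_var_def
  by (rule sum.mono_neutral_left) (use assms in \<open>auto simp: in_keys_iff\<close>)

lemma pderiv_var_add: "pderiv_var v (f + g) = pderiv_var v f + pderiv_var v g"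
proof -
  let ?A = "Poly_Mapping.keys f \<union> Poly_Mapping.keys g"
  have "Poly_Mapping.keys (f + g) \<subseteq> ?A"
    by (rule keys_add)
  then show ?thesis
    by (simp add: pderiv_var_sum_superset[of ?A] lookup_add distrib_left single_add sum.distrib)
qed

lemma pderiv_var_zero: "pderiv_var v 0 = 0"
  by (simp add: pderiv_var_def)

lemma pderiv_var_single:
  "pderiv_var v (Poly_Mapping.single m c) =
    Poly_Mapping.single (m - Poly_Mapping.single v 1) (of_nat (Poly_Mapping.lookup m v) * c)"
  by (cases "c = 0") (simp_all add: pderiv_var_def)

lemma single_mult_pderiv_var_single:
  "Poly_Mapping.single n d * pderiv_var v (Poly_Mapping.single m c) =
    Poly_Mapping.single (m + n - Poly_Mapping.single v 1) (of_nat (Poly_Mapping.lookup m v) * c * d)"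
proof (cases "Poly_Mapping.lookup m v = 0")
  case False
  then have "n + (m - Poly_Mapping.single v 1) = m + n - Poly_Mapping.single v 1"
    by (intro poly_mapping_eqI) (auto simp: lookup_add lookup_minus lookup_single when_def)
  then show ?thesis
    by (simp add: pderiv_var_single mult_single mult_ac)
qed (simp add: pderiv_var_single)

lemma pderiv_var_mult:
  fixes f g :: "('v, 'a::comm_ring_1) mpoly"
  shows "pderiv_var v (f * g) = pderiv_var v f * g + f * pderiv_var v g"
proof (induction f rule: poly_mapping_single_add_induct)
  case (single m c)
  show ?case
  proof (induction g rule: poly_mapping_single_add_induct)
    case (single n d)
    let ?e = "m + n - Poly_Mapping.single v 1"
    have "pderiv_var v (Poly_Mapping.single m c * Poly_Mapping.single n d) =
      Poly_Mapping.single ?e (of_nat (Poly_Mapping.lookup m v) * c * d) +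
      Poly_Mapping.single ?e (of_nat (Poly_Mapping.lookup n v) * d * c)"
      by (simp add: mult_single pderiv_var_single lookup_add single_add[symmetric] algebra_simps)
    then show ?case
      using single_mult_pderiv_var_single[of n d v m c] single_mult_pderiv_var_single[of m c v n d]
      by (simp add: add.commute mult.commute)
  qed (simp_all add: distrib_left pderiv_var_zero pderiv_var_add algebra_simps)
qed (simp_all add: distrib_right pderiv_var_zero pderiv_var_add algebra_simps)

lemma is_derivation_pderiv_var: "is_derivation (pderiv_var v)"
  unfolding is_derivation_def by (simp add: pderiv_var_add pderiv_var_mult)

lemma strongly_Golod_iff:
  "is_ideal I \<Longrightarrow> strongly_Golod I \<longleftrightarrow> (\<forall>a\<in>deriv_ideal I. \<forall>b\<in>deriv_ideal I. a * b \<in> I)"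
  unfolding strongly_Golod_def by (rule ideal_pow_2_subset_iff)

lemma deriv_ideal_subset_prime:
  assumes "strongly_Golod I" "prime_ideal P" "I \<subseteq> P"
  shows "deriv_ideal I \<subseteq> P"
proof
  fix g assume "g \<in> deriv_ideal I"
  then have "g * g \<in> P"
    using assms(1,3) mult_mem_ideal_pow_2 unfolding strongly_Golod_def by blast
  with assms(2) show "g \<in> P"
    unfolding prime_ideal_def by blast
qed

lemma deriv_ideal_ideal_sum_ideal_pow:
  "deriv_ideal (ideal_sum I (ideal_pow P k)) \<subseteq> ideal_sum (deriv_ideal I) (ideal_pow P (k - 1))"
  unfolding deriv_ideal_def[of "ideal_sum I (ideal_pow P k)"]
proof (rule ideal_gen_least)
  show "is_ideal (ideal_sum (deriv_ideal I) (ideal_pow P (k - 1)))"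
    unfolding deriv_ideal_def by (intro is_ideal_ideal_sum is_ideal_ideal_gen is_ideal_ideal_pow)
next
  show "{pderiv_var v f |v f. f \<in> ideal_sum I (ideal_pow P k)}
    \<subseteq> ideal_sum (deriv_ideal I) (ideal_pow P (k - 1))"
  proof clarify
    fix v f assume "f \<in> ideal_sum I (ideal_pow P k)"
    then obtain a b where f: "f = a + b" "a \<in> I" "b \<in> ideal_pow P k"
      unfolding ideal_sum_def by blast
    have "pderiv_var v a \<in> deriv_ideal I"
      unfolding deriv_ideal_def using \<open>a \<in> I\<close> by (intro subsetD[OF ideal_gen_subset]) blast
    moreover have "pderiv_var v b \<in> ideal_pow P (k - 1)"
      using \<open>b \<in> ideal_pow P k\<close> by (rule derivation_mem_ideal_pow[OF is_derivation_pderiv_var])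
    ultimately show "pderiv_var v f \<in> ideal_sum (deriv_ideal I) (ideal_pow P (k - 1))"
      unfolding ideal_sum_def f(1) pderiv_var_add by blast
  qed
qed

lemma mult_mem_ideal_sum_ideal_pow:
  assumes "\<forall>a\<in>D. \<forall>b\<in>D. a * b \<in> I" "D \<subseteq> P" "k \<ge> 2"
    and "x \<in> ideal_sum D (ideal_pow P (k - 1))" "y \<in> ideal_sum D (ideal_pow P (k - 1))"
  shows "x * y \<in> ideal_sum I (ideal_pow P k)"
proof -
  obtain a a' where a: "x = a + a'" "a \<in> D" "a' \<in> ideal_pow P (k - 1)"
    using assms(4) unfolding ideal_sum_def by blast
  obtain b b' where b: "y = b + b'" "b \<in> D" "b' \<in> ideal_pow P (k - 1)"
    using assms(5) unfolding ideal_sum_def by blast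
  have "a \<in> ideal_pow P 1" "b \<in> ideal_pow P 1"
    using a(2) b(2) assms(2) mem_ideal_pow_1 by blast+
  then have "a * b' \<in> ideal_pow P (1 + (k - 1))" "b * a' \<in> ideal_pow P (1 + (k - 1))"
    using a(3) b(3) by (blast intro: ideal_pow_mult)+
  moreover have "a' * b' \<in> ideal_pow P k"
  proof -
    have "ideal_pow P (k - 1 + (k - 1)) \<subseteq> ideal_pow P k"
      using assms(3) by (intro ideal_pow_antimono) linarith
    then show ?thesis
      using ideal_pow_mult[OF a(3) b(3)] by blast
  qed
  ultimately have "a * b' + b * a' + a' * b' \<in> ideal_pow P k"
    using assms(3) by (simp add: is_ideal_add[OF is_ideal_ideal_pow])
  moreover have "a * b \<in> I"
    using a b assms(1) by blast
  moreover have "x * y = a * b + (a * b' + b * a' + a' * b')"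
    using a(1) b(1) by (simp add: algebra_simps)
  ultimately show ?thesis
    unfolding ideal_sum_def by blast
qed

theorem corollary2p2:
  fixes w :: "'v::finite \<Rightarrow> nat"
    and I P :: "('v, 'a::field_char_0) mpoly set"
    and k :: nat
  assumes "\<forall>v. w v > 0"
    and "graded_ideal w I" and "I \<noteq> UNIV"
    and "strongly_Golod I"
    and "prime_ideal P" and "graded_ideal w P" and "I \<subseteq> P"
    and "k \<ge> 2"
  shows "strongly_Golod (ideal_sum I (ideal_pow P k))"
proof -
  have "is_ideal I"
    using assms(2) unfolding graded_ideal_def by blast
  with assms(4) have golod: "\<forall>a\<in>deriv_ideal I. \<forall>b\<in>deriv_ideal I. a * b \<in> I"
    by (simp add: strongly_Golod_iff)
  have "deriv_ideal I \<subseteq> P"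
    using assms(4,5,7) by (rule deriv_ideal_subset_prime)
  have "x * y \<in> ideal_sum I (ideal_pow P k)"
    if "x \<in> deriv_ideal (ideal_sum I (ideal_pow P k))" "y \<in> deriv_ideal (ideal_sum I (ideal_pow P k))"
    for x y
    using golod \<open>deriv_ideal I \<subseteq> P\<close> assms(8) that[THEN subsetD[OF deriv_ideal_ideal_sum_ideal_pow]]
    by (rule mult_mem_ideal_sum_ideal_pow)
  moreover have "is_ideal (ideal_sum I (ideal_pow P k))"
    using \<open>is_ideal I\<close> by (intro is_ideal_ideal_sum is_ideal_ideal_pow)
  ultimately show ?thesis
    by (simp add: strongly_Golod_iff)
qed

end
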